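(* Let $G_n=([n],E_n)$ be any finite undirected graph without isolated vertices, with degree vector $\boldsymbol{d}=(d_i)_{i\in[n]}$, and let $c\in(0,1)$. Let $\boldsymbol{R}=(R_i)_{i\in[n]}$ be the graph-normalized PageRank vector of $G_n$ with damping factor $c$. Then $$R_i\le d_i\qquad\text{for all } i\in[n].$$
   Context: $\boldsymbol{A}=(a_{ij})_{i,j\in[n]}\in\{0,1\}^{n\times n}$ is the (symmetric) adjacency matrix of $G_n$ and $d_i=\sum_j a_{ij}\ge 1$. Define the row-stochastic matrix $\boldsymbol{P}=(p_{ij})$ by $p_{ij}=a_{ij}/d_i$. The graph-normalized PageRank vector with damping factor $c\in(0,1)$ is the unique (row) vector $\boldsymbol{R}\in[0,n]^n$ solving $\boldsymbol{R}=c\,\boldsymbol{R}\boldsymbol{P}+(1-c)\boldsymbol{1}_n$, where $\boldsymbol{1}_n$ is the all-ones vector; equivalently $R_k=(1-c)\sum_{s=0}^\infty c^s\sum_{j=1}^n(\boldsymbol{P}^s)_{jk}$. *)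

theory Defs
  imports Complex_Main
begin

text \<open>Vertices of G_n are 0,...,n-1 (standing for [n]). Matrices are functions
  nat => nat => real, only entries with indices < n are meaningful.\<close>

definition degree :: "nat \<Rightarrow> (nat \<Rightarrow> nat \<Rightarrow> real) \<Rightarrow> nat \<Rightarrow> real" where
  "degree n A i = (\<Sum>j<n. A i j)"

definition trans_mat :: "nat \<Rightarrow> (nat \<Rightarrow> nat \<Rightarrow> real) \<Rightarrow> nat \<Rightarrow> nat \<Rightarrow> real" where
  "trans_mat n A i j = A i j / degree n A i"

fun mat_pow :: "nat \<Rightarrow> (nat \<Rightarrow> nat \<Rightarrow> real) \<Rightarrow> nat \<Rightarrow> nat \<Rightarrow> nat \<Rightarrow> real" where
  "mat_pow n P 0 = (\<lambda>i j. if i = j then 1 else 0)"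
| "mat_pow n P (Suc s) = (\<lambda>i j. \<Sum>k<n. mat_pow n P s i k * P k j)"

definition pagerank :: "nat \<Rightarrow> (nat \<Rightarrow> nat \<Rightarrow> real) \<Rightarrow> real \<Rightarrow> nat \<Rightarrow> real" where
  "pagerank n A c k = (1 - c) * (\<Sum>s. c ^ s * (\<Sum>j<n. mat_pow n (trans_mat n A) s j k))"

end

theory Submission
  imports Defs
begin

text \<open>Since the adjacency matrix is symmetric, the degree vector d is a left eigenvector of P
  for the eigenvalue 1, hence d P^s = d for every s. As P^s is nonnegative and every
  d_j \<ge> 1, the k-th column sum of P^s is at most (d P^s)_k = d_k; summing the
  geometric series then gives R_k \<le> (1 - c) \<Sum>_s c^s d_k = d_k.\<close>

lemma mat_pow_nonneg:
  assumes "\<forall>i<n. \<forall>j<n. 0 \<le> P i j" and "j < n" and "k < n"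
  shows "0 \<le> mat_pow n P s j k"
  using assms(3) by (induction s arbitrary: k) (use assms in \<open>auto intro!: sum_nonneg\<close>)

lemma mat_pow_left_invariant:
  assumes invariant: "\<And>k. k < n \<Longrightarrow> (\<Sum>j<n. w j * P j k) = w k" and "k < n"
  shows "(\<Sum>j<n. w j * mat_pow n P s j k) = w k"
  using \<open>k < n\<close>
proof (induction s arbitrary: k)
  case 0
  then show ?case by (simp add: if_distrib sum.delta cong: if_cong)
next
  case (Suc s)
  have "(\<Sum>j<n. w j * mat_pow n P (Suc s) j k)
      = (\<Sum>j<n. \<Sum>m<n. w j * mat_pow n P s j m * P m k)"
    by (simp add: sum_distrib_left mult.assoc)
  also have "\<dots> = (\<Sum>m<n. (\<Sum>j<n. w j * mat_pow n P s j m) * P m k)"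
    by (subst sum.swap) (simp add: sum_distrib_right)
  also have "\<dots> = (\<Sum>m<n. w m * P m k)"
    using Suc.IH by simp
  also have "\<dots> = w k"
    using invariant Suc.prems .
  finally show ?case .
qed

lemma trans_mat_nonneg:
  assumes "\<forall>i<n. \<forall>j<n. 0 \<le> A i j" and "\<forall>i<n. 0 \<le> degree n A i"
  shows "\<forall>i<n. \<forall>j<n. 0 \<le> trans_mat n A i j"
  using assms by (simp add: trans_mat_def)

lemma degree_left_invariant_trans_mat:
  assumes sym: "\<forall>i<n. \<forall>j<n. A i j = A j i"
    and nonzero: "\<forall>i<n. degree n A i \<noteq> 0" and "k < n"
  shows "(\<Sum>j<n. degree n A j * trans_mat n A j k) = degree n A k"
proof -
  have "(\<Sum>j<n. degree n A j * trans_mat n A j k) = (\<Sum>j<n. A j k)"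
    using nonzero by (intro sum.cong) (simp_all add: trans_mat_def)
  also have "\<dots> = (\<Sum>j<n. A k j)"
    using sym \<open>k < n\<close> by simp
  finally show ?thesis
    by (simp add: degree_def)
qed

lemma sum_le_weighted_sum:
  fixes f w :: "nat \<Rightarrow> real"
  assumes "\<forall>j<n. 0 \<le> f j" and "\<forall>j<n. 1 \<le> w j"
  shows "(\<Sum>j<n. f j) \<le> (\<Sum>j<n. w j * f j)"
  by (intro sum_mono) (use assms in \<open>auto simp: mult_le_cancel_right1\<close>)

lemma geometric_average_le_bound:
  fixes c B :: real
  assumes "0 \<le> c" "c < 1" and "\<And>s. 0 \<le> v s" and "\<And>s. v s \<le> B"
  shows "(1 - c) * (\<Sum>s. c ^ s * v s) \<le> B"
proof -
  have geometric: "summable (\<lambda>s. c ^ s * B)"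
    using assms(1,2) by (intro summable_mult2 summable_geometric) simp
  have dominated: "c ^ s * v s \<le> c ^ s * B" for s
    using assms by (simp add: mult_left_mono)
  have summable: "summable (\<lambda>s. c ^ s * v s)"
    by (rule summable_comparison_test'[OF geometric, of 0]) (use assms dominated in simp)
  have "(\<Sum>s. c ^ s * v s) \<le> (\<Sum>s. c ^ s * B)"
    by (rule suminf_le[OF dominated summable geometric])
  also have "\<dots> = B / (1 - c)"
    using assms(1,2) by (simp add: suminf_mult2[symmetric] suminf_geometric)
  finally show ?thesis
    using assms(2) by (simp add: field_simps)
qed

theorem mainTheorem1:
  fixes n :: nat and A :: "nat \<Rightarrow> nat \<Rightarrow> real" and c :: real
  assumes A01: "\<forall>i<n. \<forall>j<n. A i j \<in> {0, 1}"
    and Asym: "\<forall>i<n. \<forall>j<n. A i j = A j i"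
    and no_isolated: "\<forall>i<n. degree n A i \<ge> 1"
    and c_pos: "0 < c" and c_lt1: "c < 1"
  shows "\<forall>i<n. pagerank n A c i \<le> degree n A i"
proof (intro allI impI)
  fix k assume "k < n"
  define P where "P = trans_mat n A"
  have A_nonneg: "\<forall>i<n. \<forall>j<n. 0 \<le> A i j"
    using A01 by fastforce
  have degree_nonneg: "\<forall>i<n. 0 \<le> degree n A i"
    using no_isolated zero_le_one order_trans by blast
  have degree_nonzero: "\<forall>i<n. degree n A i \<noteq> 0"
    using no_isolated by fastforce
  have P_nonneg: "\<forall>i<n. \<forall>j<n. 0 \<le> P i j"
    unfolding P_def using A_nonneg degree_nonneg by (rule trans_mat_nonneg)
  have "0 \<le> (\<Sum>j<n. mat_pow n P s j k)" for s
    by (intro sum_nonneg) (use mat_pow_nonneg[OF P_nonneg _ \<open>k < n\<close>] in simp)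
  moreover have "(\<Sum>j<n. mat_pow n P s j k) \<le> degree n A k" for s
  proof -
    have "(\<Sum>j<n. mat_pow n P s j k) \<le> (\<Sum>j<n. degree n A j * mat_pow n P s j k)"
      using mat_pow_nonneg[OF P_nonneg _ \<open>k < n\<close>] no_isolated
      by (intro sum_le_weighted_sum) auto
    also have "\<dots> = degree n A k"
      using degree_left_invariant_trans_mat[OF Asym degree_nonzero] \<open>k < n\<close>
      unfolding P_def by (rule mat_pow_left_invariant)
    finally show ?thesis .
  qed
  ultimately show "pagerank n A c k \<le> degree n A k"
    unfolding pagerank_def P_def[symmetric] using c_pos c_lt1
    by (intro geometric_average_le_bound) auto
qed

end
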